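(* Fix all parameters $p_B,p_E,m_B,m_E,K_{B,r},K_{E,r}$ ($r=1,2$) and $\bar\gamma_E$, and regard the average secrecy capacity $\bar C_s=\int_0^\infty\ln(1+\gamma)f_B(\gamma)F_E(\gamma)\,d\gamma+\int_0^\infty\ln(1+\gamma)f_E(\gamma)F_B(\gamma)\,d\gamma-\int_0^\infty\ln(1+\gamma)f_E(\gamma)\,d\gamma$ as a function of $\bar\gamma_B$. Then the high-SNR slope satisfies $$S_\infty:=\lim_{\bar\gamma_B\to\infty}\frac{\bar C_s}{\log_2\bar\gamma_B}=\ln 2,$$ independently of $m_\ell$, $K_{\ell,r}$ and $p_\ell$.
   Context: Setting. For each $\ell\in\{B,E\}$ (legitimate receiver $B$, eavesdropper $E$) fix parameters $p_\ell\in[0,1]$, $m_\ell>0$, $K_{\ell,1},K_{\ell,2}>0$ and $\bar\gamma_\ell>0$; put $\bar K_\ell=p_\ell K_{\ell,1}+(1-p_\ell)K_{\ell,2}$, $Q_{\ell,1}=p_\ell$, $Q_{\ell,2}=1-p_\ell$. For $r\in\{1,2\}$ and $\gamma\ge0$ let $f_{RS,\ell,r}(\gamma)=\frac{1+\bar K_\ell}{\bar\gamma_\ell}\big(\frac{m_\ell}{m_\ell+K_{\ell,r}}\big)^{m_\ell}\exp\big(-\frac{(1+\bar K_\ell)\gamma}{\bar\gamma_\ell}\big)\,{}_1F_1\big(m_\ell;1;\frac{K_{\ell,r}(1+\bar K_\ell)\gamma}{\bar\gamma_\ell(m_\ell+K_{\ell,r})}\big)$ and $F_{RS,\ell,r}(\gamma)=\int_0^\gamma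 f_{RS,\ell,r}(t)\,dt$, where ${}_1F_1$ is Kummer's confluent hypergeometric function. The Alternate Rician Shadowed (ARS) SNR $\gamma_\ell$ has density $f_\ell=Q_{\ell,1}f_{RS,\ell,1}+Q_{\ell,2}f_{RS,\ell,2}$ and CDF $F_\ell=Q_{\ell,1}F_{RS,\ell,1}+Q_{\ell,2}F_{RS,\ell,2}$ on $[0,\infty)$; $\gamma_B,\gamma_E$ are independent. Note $\bar C_s=\mathbb E[\max(\ln(1+\gamma_B)-\ln(1+\gamma_E),0)]$. *)

theory Defs
  imports "HOL-Analysis.Analysis"
begin

definition hyp1F1 :: "real \<Rightarrow> real \<Rightarrow> real \<Rightarrow> real" where
  "hyp1F1 a b z = (\<Sum>n. pochhammer a n / pochhammer b n * z ^ n / fact n)"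

definition Kbar :: "real \<Rightarrow> real \<Rightarrow> real \<Rightarrow> real" where
  "Kbar p K1 K2 = p * K1 + (1 - p) * K2"

definition fRS :: "real \<Rightarrow> real \<Rightarrow> real \<Rightarrow> real \<Rightarrow> real \<Rightarrow> real \<Rightarrow> real \<Rightarrow> real" where
  "fRS p m K1 K2 gbar Kr g =
     (1 + Kbar p K1 K2) / gbar * (m / (m + Kr)) powr m
     * exp (- (1 + Kbar p K1 K2) * g / gbar)
     * hyp1F1 m 1 (Kr * (1 + Kbar p K1 K2) * g / (gbar * (m + Kr)))"

definition FRS :: "real \<Rightarrow> real \<Rightarrow> real \<Rightarrow> real \<Rightarrow> real \<Rightarrow> real \<Rightarrow> real \<Rightarrow> real" where
  "FRS p m K1 K2 gbar Kr g = (LBINT t:{0..g}. fRS p m K1 K2 gbar Kr t)"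

definition ars_pdf :: "real \<Rightarrow> real \<Rightarrow> real \<Rightarrow> real \<Rightarrow> real \<Rightarrow> real \<Rightarrow> real" where
  "ars_pdf p m K1 K2 gbar g = p * fRS p m K1 K2 gbar K1 g + (1 - p) * fRS p m K1 K2 gbar K2 g"

definition ars_cdf :: "real \<Rightarrow> real \<Rightarrow> real \<Rightarrow> real \<Rightarrow> real \<Rightarrow> real \<Rightarrow> real" where
  "ars_cdf p m K1 K2 gbar g = p * FRS p m K1 K2 gbar K1 g + (1 - p) * FRS p m K1 K2 gbar K2 g"

definition avg_secrecy_capacity ::
  "real \<Rightarrow> real \<Rightarrow> real \<Rightarrow> real \<Rightarrow> real \<Rightarrow> real \<Rightarrow> real \<Rightarrow> real \<Rightarrow> real \<Rightarrow> real \<Rightarrow> real" where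
  "avg_secrecy_capacity pB mB KB1 KB2 gB pE mE KE1 KE2 gE =
     (LBINT g:{0..}. ln (1 + g) * ars_pdf pB mB KB1 KB2 gB g * ars_cdf pE mE KE1 KE2 gE g)
   + (LBINT g:{0..}. ln (1 + g) * ars_pdf pE mE KE1 KE2 gE g * ars_cdf pB mB KB1 KB2 gB g)
   - (LBINT g:{0..}. ln (1 + g) * ars_pdf pE mE KE1 KE2 gE g)"

end

(*
  Write A(c) for the ergodic capacity E ln (1 + g) of a link whose SNR g has average c.
  The secrecy integral lies between A(c) - 2 E ln (1 + g_E) and A(c), so it suffices that
  A(c) / ln c tends to 1.  In the Rician shadowed density the average SNR only enters through
  the rate l = (1 + Kbar) / c of l (1 - b)^m exp (- l x) 1F1 (m; 1; b l x), b = K / (m + K),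
  whose Laplace transform is explicit.  Hence the mean of the density is O(c) and its height
  on [0, c] is O(1/c), and the same holds for the two-state mixture.  The mean bound and
  ln (1 + g) <= ln (1 + c) + g / c give A(c) <= ln c + O(1); the height bound leaves mass at
  most O(1 / ln c) below c / ln c, which gives A(c) >= ln c - O(ln ln c).
*)
theory Submission
  imports Defs "HOL-Probability.Distributions" "HOL-Real_Asymp.Real_Asymp"
begin

definition kummer_term :: "real \<Rightarrow> real \<Rightarrow> nat \<Rightarrow> real" where
  "kummer_term m z n = pochhammer m n / (fact n * fact n) * z ^ n"

lemma hyp1F1_1_eq_suminf: "hyp1F1 m 1 z = (\<Sum>n. kummer_term m z n)"
  unfolding hyp1F1_def kummer_term_def by (simp add: pochhammer_fact[symmetric] field_simps)

lemma summable_kummer_term: "summable (kummer_term m z)"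
proof (rule summable_ratio_test[where c="1/2" and N="nat \<lceil>2*(\<bar>m\<bar>+1)*(\<bar>z\<bar>+1)\<rceil>"])
  fix n assume n: "nat \<lceil>2*(\<bar>m\<bar>+1)*(\<bar>z\<bar>+1)\<rceil> \<le> n"
  have n1: "2*(\<bar>m\<bar>+1)*(\<bar>z\<bar>+1) \<le> real n + 1" using n by linarith
  have step: "kummer_term m z (Suc n) = kummer_term m z n * ((m + n) * z / ((real n + 1)^2))"
    unfolding kummer_term_def by (simp add: pochhammer_Suc field_simps power2_eq_square)
  have "\<bar>m + n\<bar> \<le> (\<bar>m\<bar>+1)*(real n + 1)"
  proof -
    have "0 \<le> \<bar>m\<bar> * real n" by simp
    then show ?thesis using abs_triangle_ineq[of m "real n"] unfolding ring_distribs by linarith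
  qed
  then have "\<bar>m + n\<bar> * \<bar>z\<bar> \<le> (\<bar>m\<bar>+1)*(real n + 1)*\<bar>z\<bar>"
    by (rule mult_right_mono) simp
  also have "\<dots> \<le> (real n + 1) * ((\<bar>m\<bar>+1)*(\<bar>z\<bar>+1))"
    by (simp add: algebra_simps)
  also have "\<dots> \<le> (real n + 1) * ((real n + 1)/2)"
    using n1 by (intro mult_left_mono) (simp_all add: algebra_simps)
  finally have "\<bar>m + n\<bar> * \<bar>z\<bar> \<le> 1/2 * (real n + 1)^2"
    by (simp add: power2_eq_square)
  then have ratio: "\<bar>m + n\<bar> * \<bar>z\<bar> / (real n + 1)^2 \<le> 1/2"
    by (simp add: pos_divide_le_eq)
  have "norm (kummer_term m z (Suc n)) = norm (kummer_term m z n) * (\<bar>m + n\<bar> * \<bar>z\<bar> / (real n + 1)^2)"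
    unfolding step by (simp add: abs_mult)
  also have "\<dots> \<le> norm (kummer_term m z n) * (1/2)"
    using ratio by (rule mult_left_mono) simp
  finally show "norm (kummer_term m z (Suc n)) \<le> 1/2 * norm (kummer_term m z n)"
    by simp
qed simp

lemma kummer_term_nonneg: "0 < m \<Longrightarrow> 0 \<le> z \<Longrightarrow> 0 \<le> kummer_term m z n"
  unfolding kummer_term_def by (auto intro!: mult_nonneg_nonneg divide_nonneg_nonneg pochhammer_nonneg)

lemma hyp1F1_1_nonneg: "0 < m \<Longrightarrow> 0 \<le> z \<Longrightarrow> 0 \<le> hyp1F1 m 1 z"
  unfolding hyp1F1_1_eq_suminf by (intro suminf_nonneg summable_kummer_term kummer_term_nonneg)

lemma hyp1F1_1_mono:
  assumes "0 < m" "0 \<le> z" "z \<le> w"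
  shows "hyp1F1 m 1 z \<le> hyp1F1 m 1 w"
  unfolding hyp1F1_1_eq_suminf
proof (intro suminf_le summable_kummer_term)
  fix n show "kummer_term m z n \<le> kummer_term m w n"
    unfolding kummer_term_def using assms
    by (intro mult_left_mono power_mono divide_nonneg_nonneg pochhammer_nonneg) auto
qed

lemma borel_measurable_hyp1F1 [measurable]:
  "(\<lambda>x. hyp1F1 m 1 (f x)) \<in> borel_measurable borel" if [measurable]: "f \<in> borel_measurable borel"
  unfolding hyp1F1_def by measurable

lemma nn_integral_power_exp:
  assumes "0 < l"
  shows "(\<integral>\<^sup>+x. ennreal (x^n * exp (-l*x)) * indicator {0..} x \<partial>lborel) = ennreal (fact n / l^(Suc n))"
proof -
  have "(\<integral>\<^sup>+x. ennreal (x^n * exp (-l*x)) * indicator {0..} x \<partial>lborel)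
      = (\<integral>\<^sup>+x. ennreal (1/l) * ennreal (erlang_density 0 l x * x ^ n) \<partial>lborel)"
    using assms by (intro nn_integral_cong)
      (auto simp: erlang_density_def ennreal_mult'[symmetric] split: split_indicator)
  also have "\<dots> = ennreal (1/l) * ennreal (fact n / l^n)"
    using nn_integral_erlang_ith_moment[OF assms, of 0 n] by (simp add: nn_integral_cmult)
  also have "\<dots> = ennreal (fact n / l^(Suc n))"
    using assms by (simp add: ennreal_mult'[symmetric] field_simps)
  finally show ?thesis .
qed

lemma pochhammer_sums_powr:
  fixes m x :: real
  assumes "0 \<le> x" "x < 1"
  shows "(\<lambda>n. pochhammer m n / fact n * x^n) sums (1 - x) powr (-m)"
proof -
  have "\<bar>- x\<bar> < 1" using assms by auto
  from gen_binomial_real[OF this, of "-m"]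
  have "(\<lambda>n. ((-m) gchoose n) * (- x)^n) sums (1 + - x) powr (-m)" .
  moreover have "((-m) gchoose n) * (- x)^n = pochhammer m n / fact n * x^n" for n
  proof -
    have "((-m) gchoose n) * (- x)^n = ((-1)^n * pochhammer m n / fact n) * ((-1)^n * x^n)"
      by (subst gbinomial_pochhammer, subst power_minus, simp only: minus_minus)
    also have "\<dots> = ((-1)^n * (-1)^n) * (pochhammer m n / fact n * x^n)"
      by (simp add: ac_simps)
    also have "(-1::real)^n * (-1)^n = 1" by (simp flip: power_mult_distrib)
    finally show ?thesis by simp
  qed
  ultimately show ?thesis by simp
qed

text \<open>Integrate the Kummer series termwise against the Gamma moments and resum it with the
  binomial series \<open>\<Sum>n. pochhammer m n / fact n * x\<^sup>n = (1 - x) powr (-m)\<close>.\<close>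
lemma nn_integral_exp_hyp1F1:
  assumes m: "0 < m" and l: "0 < l" and b: "0 \<le> b" "b < l"
  shows "(\<integral>\<^sup>+x. ennreal (exp (-l*x) * hyp1F1 m 1 (b*x)) * indicator {0..} x \<partial>lborel)
       = ennreal ((1 - b/l) powr (-m) / l)"
proof -
  define t where "t n x = ennreal (exp (-l*x) * kummer_term m (b*x) n) * indicator {0..} x" for n x
  have series: "ennreal (exp (-l*x) * hyp1F1 m 1 (b*x)) * indicator {0..} x = (\<Sum>n. t n x)" for x
  proof (cases "0 \<le> x")
    case True
    have "exp (-l*x) * hyp1F1 m 1 (b*x) = (\<Sum>n. exp (-l*x) * kummer_term m (b*x) n)"
      unfolding hyp1F1_1_eq_suminf by (intro suminf_mult[symmetric] summable_kummer_term)
    moreover have "ennreal (\<Sum>n. exp (-l*x) * kummer_term m (b*x) n)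
        = (\<Sum>n. ennreal (exp (-l*x) * kummer_term m (b*x) n))"
      using True b m
      by (intro suminf_ennreal2[symmetric] summable_mult summable_kummer_term
            mult_nonneg_nonneg kummer_term_nonneg) auto
    ultimately show ?thesis using True by (simp add: t_def)
  qed (simp add: t_def)
  have termwise: "integral\<^sup>N lborel (t n) = ennreal (pochhammer m n / fact n * (b/l)^n / l)" for n
  proof -
    define a where "a = pochhammer m n / (fact n * fact n) * b^n"
    have a: "0 \<le> a" unfolding a_def using m b by (simp add: pochhammer_nonneg)
    have pointwise: "t n x = ennreal a * (ennreal (x^n * exp (-l*x)) * indicator {0..} x)" for x
    proof (cases "0 \<le> x")
      case True
      have "exp (-l*x) * kummer_term m (b*x) n = a * (x^n * exp (-l*x))"
        by (simp add: kummer_term_def a_def power_mult_distrib)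
      then show ?thesis using True a by (simp add: t_def ennreal_mult' mult_ac)
    qed (simp add: t_def)
    have "integral\<^sup>N lborel (t n)
        = (\<integral>\<^sup>+x. ennreal a * (ennreal (x^n * exp (-l*x)) * indicator {0..} x) \<partial>lborel)"
      by (simp only: pointwise[abs_def])
    also have "\<dots> = ennreal a * ennreal (fact n / l^(Suc n))"
      using nn_integral_power_exp[OF l, of n] by (simp add: nn_integral_cmult)
    also have "\<dots> = ennreal (a * (fact n / l^(Suc n)))"
      using a l by (simp add: ennreal_mult' del: times_divide_eq_right)
    also have "a * (fact n / l^(Suc n)) = pochhammer m n / fact n * (b/l)^n / l"
      using l by (simp add: a_def power_divide)
    finally show ?thesis .
  qed
  have "(\<integral>\<^sup>+x. ennreal (exp (-l*x) * hyp1F1 m 1 (b*x)) * indicator {0..} x \<partial>lborel)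
      = (\<Sum>n. integral\<^sup>N lborel (t n))"
    unfolding series by (intro nn_integral_suminf) (simp add: t_def kummer_term_def)
  also have "\<dots> = ennreal ((1 - b/l) powr (-m) / l)"
    unfolding termwise using m b l
    by (intro suminf_ennreal_eq sums_divide pochhammer_sums_powr)
      (simp_all add: pochhammer_nonneg)
  finally show ?thesis .
qed

definition rs_density :: "real \<Rightarrow> real \<Rightarrow> real \<Rightarrow> real \<Rightarrow> real" where
  "rs_density m \<beta> l x = l * (1 - \<beta>) powr m * exp (- l * x) * hyp1F1 m 1 (\<beta> * l * x)"

lemma fRS_eq_rs_density:
  assumes "0 < m" "0 < Kr"
  shows "fRS p m K1 K2 gb Kr = rs_density m (Kr / (m + Kr)) ((1 + Kbar p K1 K2) / gb)"
proof
  fix g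
  have "m / (m + Kr) = 1 - Kr / (m + Kr)" using assms by (simp add: field_simps)
  moreover have "- (1 + Kbar p K1 K2) * g / gb = - ((1 + Kbar p K1 K2) / gb) * g"
    by (metis minus_divide_left times_divide_eq_left)
  moreover have "Kr * (1 + Kbar p K1 K2) * g / (gb * (m + Kr))
      = Kr / (m + Kr) * ((1 + Kbar p K1 K2) / gb) * g"
    by simp
  ultimately show "fRS p m K1 K2 gb Kr g = rs_density m (Kr / (m + Kr)) ((1 + Kbar p K1 K2) / gb) g"
    unfolding fRS_def rs_density_def by (simp only: mult.assoc)
qed

lemma rs_density_nonneg: "0 < m \<Longrightarrow> 0 \<le> \<beta> \<Longrightarrow> 0 \<le> l \<Longrightarrow> 0 \<le> x \<Longrightarrow> 0 \<le> rs_density m \<beta> l x"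
  unfolding rs_density_def by (intro mult_nonneg_nonneg hyp1F1_1_nonneg) auto

lemma borel_measurable_rs_density [measurable]: "rs_density m \<beta> l \<in> borel_measurable borel"
  unfolding rs_density_def by measurable

lemma nn_integral_rs_density:
  assumes m: "0 < m" and \<beta>: "0 \<le> \<beta>" "\<beta> < 1" and l: "0 < l"
  shows "(\<integral>\<^sup>+x. ennreal (rs_density m \<beta> l x) * indicator {0..} x \<partial>lborel) = 1"
proof -
  have c: "0 \<le> l * (1 - \<beta>) powr m" using l by simp
  have "(\<integral>\<^sup>+x. ennreal (rs_density m \<beta> l x) * indicator {0..} x \<partial>lborel)
      = ennreal (l * (1 - \<beta>) powr m) *
        (\<integral>\<^sup>+x. ennreal (exp (-l*x) * hyp1F1 m 1 ((\<beta> * l) * x)) * indicator {0..} x \<partial>lborel)"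
    unfolding rs_density_def
    by (subst nn_integral_cmult[symmetric]) (auto intro!: nn_integral_cong simp: ennreal_mult'[OF c, symmetric] mult_ac)
  also have "\<dots> = ennreal (l * (1 - \<beta>) powr m) * ennreal ((1 - \<beta>) powr (-m) / l)"
    using nn_integral_exp_hyp1F1[of m l "\<beta> * l"] m \<beta> l by simp
  also have "\<dots> = ennreal (l * (1 - \<beta>) powr m * ((1 - \<beta>) powr (-m) / l))"
    by (simp add: ennreal_mult'[OF c] del: times_divide_eq_right)
  also have "l * (1 - \<beta>) powr m * ((1 - \<beta>) powr (-m) / l) = 1"
    using \<beta> l by (simp add: powr_minus)
  finally show ?thesis by simp
qed

lemma le_exp_mult_divide:
  fixes \<theta> x :: real
  assumes "0 < \<theta>"
  shows "x \<le> exp (\<theta> * x) / \<theta>"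
proof -
  have "\<theta> * x \<le> exp (\<theta> * x)" using exp_ge_add_one_self[of "\<theta> * x"] by linarith
  then show ?thesis using assms by (simp add: pos_le_divide_eq mult.commute)
qed

text \<open>The first moment is bounded by borrowing half of the exponential decay that the
  Kummer factor leaves over: \<open>x \<le> e\<^sup>\<theta>\<^sup>x / \<theta>\<close> with \<open>\<theta> = (1 - \<beta>) l / 2\<close>.\<close>
lemma nn_integral_x_rs_density_le:
  assumes m: "0 < m" and \<beta>: "0 \<le> \<beta>" "\<beta> < 1" and l: "0 < l"
  shows "(\<integral>\<^sup>+x. ennreal (x * rs_density m \<beta> l x) * indicator {0..} x \<partial>lborel)
      \<le> ennreal (4 * (1 + \<beta>) powr m / ((1 - \<beta>^2) * l))"
proof -
  define \<theta> where "\<theta> = (1 - \<beta>) * l / 2"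
  define l' where "l' = (1 + \<beta>) * l / 2"
  define c where "c = l * (1 - \<beta>) powr m / \<theta>"
  have \<theta>: "0 < \<theta>" and l': "0 < l'" "\<beta> * l < l'"
    using \<beta> l by (simp_all add: \<theta>_def l'_def field_simps add_pos_nonneg)
  have c: "0 \<le> c" using \<theta> l by (simp add: c_def)
  have "x * rs_density m \<beta> l x \<le> c * (exp (- l' * x) * hyp1F1 m 1 ((\<beta> * l) * x))" if x: "0 \<le> x" for x
  proof -
    have "x * exp (- l * x) \<le> exp (\<theta> * x) / \<theta> * exp (- l * x)"
      using le_exp_mult_divide[OF \<theta>] by (rule mult_right_mono) simp
    also have "\<dots> = exp (- l' * x) / \<theta>"
    proof -
      have "\<theta> * x + - l * x = - l' * x" by (simp add: \<theta>_def l'_def field_simps)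
      then show ?thesis by (simp add: exp_add[symmetric])
    qed
    finally have decay: "x * exp (- l * x) \<le> exp (- l' * x) / \<theta>" .
    have "x * rs_density m \<beta> l x = (l * (1 - \<beta>) powr m * hyp1F1 m 1 (\<beta> * l * x)) * (x * exp (- l * x))"
      by (simp add: rs_density_def mult_ac)
    also have "\<dots> \<le> (l * (1 - \<beta>) powr m * hyp1F1 m 1 (\<beta> * l * x)) * (exp (- l' * x) / \<theta>)"
      using decay m \<beta> l x by (intro mult_left_mono mult_nonneg_nonneg hyp1F1_1_nonneg) auto
    also have "\<dots> = c * (exp (- l' * x) * hyp1F1 m 1 ((\<beta> * l) * x))"
      by (simp add: c_def)
    finally show ?thesis .
  qed
  then have "(\<integral>\<^sup>+x. ennreal (x * rs_density m \<beta> l x) * indicator {0..} x \<partial>lborel)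
      \<le> (\<integral>\<^sup>+x. ennreal c * (ennreal (exp (- l' * x) * hyp1F1 m 1 ((\<beta> * l) * x)) * indicator {0..} x) \<partial>lborel)"
    by (intro nn_integral_mono) (auto simp: ennreal_mult'[OF c, symmetric] intro!: ennreal_leI split: split_indicator)
  also have "\<dots> = ennreal c * ennreal ((1 - \<beta> * l / l') powr (-m) / l')"
    using nn_integral_exp_hyp1F1[of m l' "\<beta> * l"] m \<beta> l l' by (simp add: nn_integral_cmult)
  also have "\<dots> = ennreal (c * ((1 - \<beta> * l / l') powr (-m) / l'))"
    by (simp add: ennreal_mult'[OF c] del: times_divide_eq_right)
  also have "c * ((1 - \<beta> * l / l') powr (-m) / l') = 4 * (1 + \<beta>) powr m / ((1 - \<beta>^2) * l)"
  proof -
    have "1 + \<beta> \<noteq> 0" using \<beta> by simp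
    moreover have "\<beta> * l / l' = 2 * \<beta> / (1 + \<beta>)" using l by (simp add: l'_def)
    ultimately have q: "1 - \<beta> * l / l' = (1 - \<beta>) / (1 + \<beta>)" by (simp add: field_simps)
    have "(1 - \<beta> * l / l') powr (-m) = (1 + \<beta>) powr m / (1 - \<beta>) powr m"
      unfolding q using \<beta> by (simp add: powr_minus powr_divide)
    moreover have "0 < (1 - \<beta>) powr m" using \<beta> by simp
    ultimately have "c * ((1 - \<beta> * l / l') powr (-m) / l') = l * (1 + \<beta>) powr m / (\<theta> * l')"
      by (simp add: c_def)
    also have "\<theta> * l' = (1 - \<beta>^2) * l * l / 4"
      by (simp add: \<theta>_def l'_def power2_eq_square algebra_simps)
    finally show ?thesis using l by simp
  qed
  finally show ?thesis .
qed

lemma rs_density_le: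
  assumes "0 < m" "0 \<le> \<beta>" "0 \<le> l" "0 \<le> x" "l * x \<le> a"
  shows "rs_density m \<beta> l x \<le> l * (1 - \<beta>) powr m * hyp1F1 m 1 (\<beta> * a)"
proof -
  have "hyp1F1 m 1 (\<beta> * l * x) \<le> hyp1F1 m 1 (\<beta> * a)"
    using assms by (intro hyp1F1_1_mono) (auto simp: mult.assoc intro: mult_left_mono)
  moreover have "exp (- l * x) \<le> 1" using assms by simp
  ultimately have "exp (- l * x) * hyp1F1 m 1 (\<beta> * l * x) \<le> 1 * hyp1F1 m 1 (\<beta> * a)"
    using assms by (intro mult_mono hyp1F1_1_nonneg) auto
  then show ?thesis
    unfolding rs_density_def using assms by (simp add: mult.assoc mult_left_mono)
qed

definition finite_mean_density :: "(real \<Rightarrow> real) \<Rightarrow> bool" where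
  "finite_mean_density \<phi> \<longleftrightarrow> \<phi> \<in> borel_measurable borel \<and> (\<forall>g\<ge>0. 0 \<le> \<phi> g)
     \<and> set_integrable lborel {0..} \<phi> \<and> (LBINT g:{0..}. \<phi> g) = 1
     \<and> set_integrable lborel {0..} (\<lambda>g. g * \<phi> g)"

lemma finite_mean_densityD:
  assumes "finite_mean_density \<phi>"
  shows "\<phi> \<in> borel_measurable borel" and "\<And>g. 0 \<le> g \<Longrightarrow> 0 \<le> \<phi> g"
    and "set_integrable lborel {0..} \<phi>" and "(LBINT g:{0..}. \<phi> g) = 1"
    and "set_integrable lborel {0..} (\<lambda>g. g * \<phi> g)"
  using assms by (auto simp: finite_mean_density_def)

lemma set_integral_nonneg:
  fixes f :: "'a \<Rightarrow> real"
  shows "(\<And>x. x \<in> A \<Longrightarrow> 0 \<le> f x) \<Longrightarrow> 0 \<le> (LINT x:A|M. f x)"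
  unfolding set_lebesgue_integral_def by (intro integral_nonneg_AE AE_I2) (auto split: split_indicator)

lemma set_integral_eq_nn_integral:
  fixes f :: "real \<Rightarrow> real"
  assumes [measurable]: "f \<in> borel_measurable borel" and nonneg: "\<And>x. 0 \<le> x \<Longrightarrow> 0 \<le> f x"
    and "0 \<le> r" and nn: "(\<integral>\<^sup>+x. ennreal (f x) * indicator {0..} x \<partial>lborel) = ennreal r"
  shows "set_integrable lborel {0..} f" and "(LBINT x:{0..}. f x) = r"
proof -
  have "(\<integral>\<^sup>+x. ennreal (indicator {0..} x *\<^sub>R f x) \<partial>lborel) = ennreal r"
    using nn by (subst nn_integral_cong[where v="\<lambda>x. ennreal (f x) * indicator {0..} x"])
      (auto split: split_indicator)
  then have "has_bochner_integral lborel (\<lambda>x. indicator {0..} x *\<^sub>R f x) r"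
    using \<open>0 \<le> r\<close> nonneg
    by (intro has_bochner_integral_nn_integral) (auto intro!: AE_I2 split: split_indicator)
  then show "set_integrable lborel {0..} f" and "(LBINT x:{0..}. f x) = r"
    unfolding set_integrable_def set_lebesgue_integral_def by (simp_all add: has_bochner_integral_iff)
qed

lemma finite_mean_densityI_nn_integral:
  fixes f :: "real \<Rightarrow> real"
  assumes [measurable]: "f \<in> borel_measurable borel" and nonneg: "\<And>x. 0 \<le> x \<Longrightarrow> 0 \<le> f x"
    and mass: "(\<integral>\<^sup>+x. ennreal (f x) * indicator {0..} x \<partial>lborel) = 1"
    and mean: "(\<integral>\<^sup>+x. ennreal (x * f x) * indicator {0..} x \<partial>lborel) \<le> ennreal C" and "0 \<le> C"
  shows "finite_mean_density f" and "(LBINT x:{0..}. x * f x) \<le> C"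
proof -
  obtain r where r: "(\<integral>\<^sup>+x. ennreal (x * f x) * indicator {0..} x \<partial>lborel) = ennreal r" "0 \<le> r" "r \<le> C"
    using mean \<open>0 \<le> C\<close> by (cases "\<integral>\<^sup>+x. ennreal (x * f x) * indicator {0..} x \<partial>lborel")
      (auto simp: ennreal_le_iff top_unique)
  have xf: "0 \<le> x * f x" if "0 \<le> x" for x using nonneg[OF that] that by simp
  note mass' = set_integral_eq_nn_integral[OF _ nonneg _ mass[unfolded ennreal_1[symmetric]]]
  note mean' = set_integral_eq_nn_integral[OF _ xf r(2,1)]
  show "finite_mean_density f" unfolding finite_mean_density_def using mass' mean' nonneg by auto
  show "(LBINT x:{0..}. x * f x) \<le> C" using mean' r(3) by simp
qed

definition density_cdf :: "(real \<Rightarrow> real) \<Rightarrow> real \<Rightarrow> real" where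
  "density_cdf \<phi> x = (LBINT t:{0..x}. \<phi> t)"

lemma set_integral_density_mono:
  assumes "finite_mean_density \<phi>" "A \<subseteq> B" "B \<subseteq> {0..}" "A \<in> sets lborel" "B \<in> sets lborel"
  shows "(LBINT t:A. \<phi> t) \<le> (LBINT t:B. \<phi> t)"
proof -
  note \<phi> = finite_mean_densityD[OF assms(1)]
  have "set_integrable lborel A \<phi>" "set_integrable lborel B \<phi>"
    using assms by (auto intro!: set_integrable_subset[OF \<phi>(3)])
  then show ?thesis unfolding set_integrable_def set_lebesgue_integral_def
    by (intro integral_mono) (use assms \<phi>(2) in \<open>auto split: split_indicator\<close>)
qed

lemma density_cdf_mono: "finite_mean_density \<phi> \<Longrightarrow> x \<le> y \<Longrightarrow> density_cdf \<phi> x \<le> density_cdf \<phi> y"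
  unfolding density_cdf_def by (rule set_integral_density_mono) auto

lemma density_cdf_le_1: "finite_mean_density \<phi> \<Longrightarrow> density_cdf \<phi> x \<le> 1"
  using set_integral_density_mono[of \<phi> "{0..x}" "{0..}"] finite_mean_densityD(4)[of \<phi>]
  by (auto simp: density_cdf_def)

lemma density_cdf_nonneg: "finite_mean_density \<phi> \<Longrightarrow> 0 \<le> density_cdf \<phi> x"
  unfolding density_cdf_def by (rule set_integral_nonneg) (auto simp: finite_mean_densityD(2))

lemma borel_measurable_density_cdf:
  "finite_mean_density \<phi> \<Longrightarrow> density_cdf \<phi> \<in> borel_measurable borel"
  by (rule borel_measurable_mono) (auto simp: mono_def density_cdf_mono)

definition ergodic_capacity :: "(real \<Rightarrow> real) \<Rightarrow> real" where
  "ergodic_capacity \<phi> = (LBINT g:{0..}. ln (1 + g) * \<phi> g)"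

lemma set_integrable_ln_density:
  assumes "finite_mean_density \<phi>"
  shows "set_integrable lborel {0..} (\<lambda>g. ln (1 + g) * \<phi> g)"
  unfolding set_integrable_def
proof (rule Bochner_Integration.integrable_bound)
  note \<phi> = finite_mean_densityD[OF assms]
  show "integrable lborel (\<lambda>g. indicator {0..} g *\<^sub>R (g * \<phi> g))"
    using \<phi>(5) by (simp add: set_integrable_def)
  have [measurable]: "\<phi> \<in> borel_measurable borel" by (rule \<phi>(1))
  show "(\<lambda>g. indicator {0..} g *\<^sub>R (ln (1 + g) * \<phi> g)) \<in> borel_measurable lborel" by measurable
  show "AE g in lborel. norm (indicator {0..} g *\<^sub>R (ln (1 + g) * \<phi> g))
      \<le> norm (indicator {0..} g *\<^sub>R (g * \<phi> g))"
  proof (intro AE_I2)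
    fix g :: real
    show "norm (indicator {0..} g *\<^sub>R (ln (1 + g) * \<phi> g)) \<le> norm (indicator {0..} g *\<^sub>R (g * \<phi> g))"
    proof (cases "0 \<le> g")
      case True
      then show ?thesis using ln_add_one_self_le_self[OF True] \<phi>(2)[OF True]
        by (simp add: abs_mult mult_right_mono)
    qed simp
  qed
qed

lemma set_integral_split_at:
  fixes f :: "real \<Rightarrow> real"
  assumes f: "set_integrable lborel {0..} f" and x: "0 \<le> x"
  shows "(LBINT g:{0..}. f g) = (LBINT g:{0..x}. f g) + (LBINT g:{x<..}. f g)"
proof -
  have "{0..} = {0..x} \<union> {x<..}" using x by auto
  moreover have "(LBINT g:{0..x} \<union> {x<..}. f g) = (LBINT g:{0..x}. f g) + (LBINT g:{x<..}. f g)"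
    using x by (intro set_integral_Un set_integrable_subset[OF f]) auto
  ultimately show ?thesis by simp
qed

text \<open>On \<open>{x<..}\<close> the weight \<open>ln (1 + g)\<close> exceeds \<open>ln (1 + x)\<close>, so the tail mass
  \<open>1 - density_cdf \<phi> x\<close> is paid for by the ergodic capacity.\<close>
lemma ln_sub_ergodic_capacity_le:
  assumes \<phi>: "finite_mean_density \<phi>" and x: "0 \<le> x"
  shows "ln (1 + x) - ergodic_capacity \<phi> \<le> ln (1 + x) * density_cdf \<phi> x"
proof -
  note d = finite_mean_densityD[OF \<phi>]
  have L: "set_integrable lborel {0..} (\<lambda>g. ln (1 + g) * \<phi> g)"
    by (rule set_integrable_ln_density[OF \<phi>])
  have "ln (1 + x) * (LBINT t:{x<..}. \<phi> t) = (LBINT t:{x<..}. ln (1 + x) * \<phi> t)" by simp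
  also have "\<dots> \<le> (LBINT g:{x<..}. ln (1 + g) * \<phi> g)"
  proof (rule set_integral_mono)
    show "set_integrable lborel {x<..} (\<lambda>t. ln (1 + x) * \<phi> t)"
      using x by (intro set_integrable_mult_right set_integrable_subset[OF d(3)]) auto
    show "set_integrable lborel {x<..} (\<lambda>g. ln (1 + g) * \<phi> g)"
      using x by (intro set_integrable_subset[OF L]) auto
    fix t assume "t \<in> {x<..}"
    then show "ln (1 + x) * \<phi> t \<le> ln (1 + t) * \<phi> t"
      using x d(2)[of t] by (intro mult_right_mono) auto
  qed
  finally have tail: "ln (1 + x) * (LBINT t:{x<..}. \<phi> t) \<le> (LBINT g:{x<..}. ln (1 + g) * \<phi> g)" .
  have "0 \<le> (LBINT g:{0..x}. ln (1 + g) * \<phi> g)"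
    by (rule set_integral_nonneg) (auto simp: d(2))
  moreover have "ln (1 + x) = ln (1 + x) * density_cdf \<phi> x + ln (1 + x) * (LBINT t:{x<..}. \<phi> t)"
    using set_integral_split_at[OF d(3) x] d(4) unfolding density_cdf_def
    by (metis distrib_left mult.right_neutral)
  ultimately show ?thesis
    using tail set_integral_split_at[OF L x] unfolding ergodic_capacity_def by linarith
qed

definition cross_capacity :: "(real \<Rightarrow> real) \<Rightarrow> (real \<Rightarrow> real) \<Rightarrow> real" where
  "cross_capacity \<phi> \<psi> = (LBINT g:{0..}. ln (1 + g) * \<phi> g * density_cdf \<psi> g)"

lemma set_integrable_cross_capacity:
  assumes \<phi>: "finite_mean_density \<phi>" and \<psi>: "finite_mean_density \<psi>"
  shows "set_integrable lborel {0..} (\<lambda>g. ln (1 + g) * \<phi> g * density_cdf \<psi> g)"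
  unfolding set_integrable_def
proof (rule Bochner_Integration.integrable_bound)
  show "integrable lborel (\<lambda>g. indicator {0..} g *\<^sub>R (ln (1 + g) * \<phi> g))"
    using set_integrable_ln_density[OF \<phi>] by (simp add: set_integrable_def)
  have [measurable]: "\<phi> \<in> borel_measurable borel" "density_cdf \<psi> \<in> borel_measurable borel"
    using finite_mean_densityD(1)[OF \<phi>] borel_measurable_density_cdf[OF \<psi>] by auto
  show "(\<lambda>g. indicator {0..} g *\<^sub>R (ln (1 + g) * \<phi> g * density_cdf \<psi> g)) \<in> borel_measurable lborel"
    by measurable
  show "AE g in lborel. norm (indicator {0..} g *\<^sub>R (ln (1 + g) * \<phi> g * density_cdf \<psi> g))
      \<le> norm (indicator {0..} g *\<^sub>R (ln (1 + g) * \<phi> g))"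
  proof (intro AE_I2)
    fix g :: real
    show "norm (indicator {0..} g *\<^sub>R (ln (1 + g) * \<phi> g * density_cdf \<psi> g))
        \<le> norm (indicator {0..} g *\<^sub>R (ln (1 + g) * \<phi> g))"
    proof (cases "0 \<le> g")
      case True
      then have "0 \<le> ln (1 + g) * \<phi> g" using finite_mean_densityD(2)[OF \<phi>] by simp
      then show ?thesis using True density_cdf_nonneg[OF \<psi>] density_cdf_le_1[OF \<psi>]
        by (simp add: abs_mult mult_left_le)
    qed simp
  qed
qed

lemma cross_capacity_bounds:
  assumes \<phi>: "finite_mean_density \<phi>" and \<psi>: "finite_mean_density \<psi>"
  shows "0 \<le> cross_capacity \<phi> \<psi>"
    and "cross_capacity \<phi> \<psi> \<le> ergodic_capacity \<phi>"
    and "ergodic_capacity \<phi> - ergodic_capacity \<psi> \<le> cross_capacity \<phi> \<psi>"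
proof -
  note \<phi>' = finite_mean_densityD[OF \<phi>]
  note cross = set_integrable_cross_capacity[OF \<phi> \<psi>]
  note L = set_integrable_ln_density[OF \<phi>]
  show "0 \<le> cross_capacity \<phi> \<psi>" unfolding cross_capacity_def
    by (rule set_integral_nonneg) (auto intro!: mult_nonneg_nonneg \<phi>'(2) density_cdf_nonneg[OF \<psi>])
  show "cross_capacity \<phi> \<psi> \<le> ergodic_capacity \<phi>"
    unfolding cross_capacity_def ergodic_capacity_def using cross L
  proof (rule set_integral_mono)
    fix g :: real assume "g \<in> {0..}"
    then have "0 \<le> ln (1 + g) * \<phi> g" using \<phi>'(2) by simp
    then show "ln (1 + g) * \<phi> g * density_cdf \<psi> g \<le> ln (1 + g) * \<phi> g"
      using density_cdf_le_1[OF \<psi>] by (simp add: mult_left_le)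
  qed
  define J where "J = ergodic_capacity \<psi>"
  have J: "set_integrable lborel {0..} (\<lambda>g. J * \<phi> g)" using \<phi>'(3) by simp
  have "ergodic_capacity \<phi> - J = (LBINT g:{0..}. ln (1 + g) * \<phi> g - J * \<phi> g)"
    using set_integral_diff(2)[OF L J] \<phi>'(4) by (simp add: ergodic_capacity_def)
  also have "\<dots> \<le> cross_capacity \<phi> \<psi>"
    unfolding cross_capacity_def using set_integral_diff(1)[OF L J] cross
  proof (rule set_integral_mono)
    fix g :: real assume "g \<in> {0..}"
    then have g: "0 \<le> g" by simp
    have "(ln (1 + g) - J) * \<phi> g \<le> (ln (1 + g) * density_cdf \<psi> g) * \<phi> g"
      using ln_sub_ergodic_capacity_le[OF \<psi> g] \<phi>'(2)[OF g] unfolding J_def by (rule mult_right_mono)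
    then show "ln (1 + g) * \<phi> g - J * \<phi> g \<le> ln (1 + g) * \<phi> g * density_cdf \<psi> g"
      by (simp add: algebra_simps)
  qed
  finally show "ergodic_capacity \<phi> - ergodic_capacity \<psi> \<le> cross_capacity \<phi> \<psi>"
    unfolding J_def .
qed

definition secrecy_integral :: "(real \<Rightarrow> real) \<Rightarrow> (real \<Rightarrow> real) \<Rightarrow> real" where
  "secrecy_integral \<phi> \<psi> = cross_capacity \<phi> \<psi> + cross_capacity \<psi> \<phi> - ergodic_capacity \<psi>"

lemma secrecy_integral_bounds:
  assumes "finite_mean_density \<phi>" "finite_mean_density \<psi>"
  shows "ergodic_capacity \<phi> - 2 * ergodic_capacity \<psi> \<le> secrecy_integral \<phi> \<psi>"
    and "secrecy_integral \<phi> \<psi> \<le> ergodic_capacity \<phi>"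
  using cross_capacity_bounds[OF assms] cross_capacity_bounds[OF assms(2,1)]
  unfolding secrecy_integral_def by linarith+

lemma ln_add_one_le_ln_add_divide:
  fixes g c :: real
  assumes "0 \<le> g" "0 < c"
  shows "ln (1 + g) \<le> ln (1 + c) + g / c"
proof -
  have "ln (1 + g) \<le> ln ((1 + c) * (1 + g / c))"
    using assms by (subst ln_le_cancel_iff) (auto simp: field_simps add_pos_nonneg)
  also have "\<dots> = ln (1 + c) + ln (1 + g / c)"
  proof -
    have "0 < 1 + g / c" using assms by (simp add: add_pos_nonneg)
    then show ?thesis using assms by (simp add: ln_mult)
  qed
  also have "ln (1 + g / c) \<le> g / c"
    using assms by (intro ln_add_one_self_le_self) simp
  finally show ?thesis by simp
qed

lemma ergodic_capacity_le:
  assumes \<phi>: "finite_mean_density \<phi>" and c: "0 < c" and M: "(LBINT g:{0..}. g * \<phi> g) \<le> M * c"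
  shows "ergodic_capacity \<phi> \<le> ln (1 + c) + M"
proof -
  note d = finite_mean_densityD[OF \<phi>]
  have i1: "set_integrable lborel {0..} (\<lambda>g. ln (1 + c) * \<phi> g)" using d(3) by simp
  have i2: "set_integrable lborel {0..} (\<lambda>g. g * \<phi> g / c)" using d(5) by simp
  have "ergodic_capacity \<phi> \<le> (LBINT g:{0..}. ln (1 + c) * \<phi> g + g * \<phi> g / c)"
    unfolding ergodic_capacity_def using set_integrable_ln_density[OF \<phi>] set_integral_add(1)[OF i1 i2]
  proof (rule set_integral_mono)
    fix g :: real assume "g \<in> {0..}"
    then have g: "0 \<le> g" by simp
    have "ln (1 + g) * \<phi> g \<le> (ln (1 + c) + g / c) * \<phi> g"
      using ln_add_one_le_ln_add_divide[OF g c] d(2)[OF g] by (rule mult_right_mono)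
    then show "ln (1 + g) * \<phi> g \<le> ln (1 + c) * \<phi> g + g * \<phi> g / c"
      by (simp add: algebra_simps)
  qed
  also have "\<dots> = ln (1 + c) + (LBINT g:{0..}. g * \<phi> g) / c"
    using set_integral_add(2)[OF i1 i2] d(4) by simp
  also have "\<dots> \<le> ln (1 + c) + M"
    using M c by (simp add: pos_divide_le_eq)
  finally show ?thesis .
qed

text \<open>A density of height at most \<open>D / c\<close> on \<open>[0, c]\<close> puts mass at most \<open>D / ln c\<close> on
  \<open>[0, c / ln c]\<close>; the remaining mass sits where \<open>ln (1 + g) \<ge> ln (c / ln c)\<close>.\<close>
lemma ergodic_capacity_ge:
  assumes \<phi>: "finite_mean_density \<phi>" and c0: "0 < c" and c: "1 \<le> ln c"
    and D: "\<And>g. 0 \<le> g \<Longrightarrow> g \<le> c \<Longrightarrow> \<phi> g \<le> D / c"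
  shows "ln (c / ln c) * (1 - D / ln c) \<le> ergodic_capacity \<phi>"
proof -
  note d = finite_mean_densityD[OF \<phi>]
  define s where "s = c / ln c"
  have c1: "1 < c" using c c0 by (intro ln_gt_zero_imp_gt_one) linarith+
  have "ln c \<le> c" using ln_le_minus_one[OF c0] by linarith
  then have s1: "1 \<le> s" unfolding s_def using c c1 by (simp add: le_divide_eq_1)
  have "c / ln c \<le> c / 1" using c c0 c1 by (intro divide_left_mono) auto
  then have sc: "s \<le> c" by (simp add: s_def)
  have ls: "0 \<le> ln s" using s1 by simp
  have box: "(\<lambda>g. indicator {0..} g *\<^sub>R (indicator {0..s} g :: real)) = indicator {0..s}"
    by (auto simp: fun_eq_iff split: split_indicator)
  have box_int: "set_integrable lborel {0..} (\<lambda>g. indicator {0..s} g :: real)"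
    unfolding set_integrable_def box by (simp add: emeasure_lborel_Icc_eq)
  have box_val: "(LBINT g:{0..}. indicator {0..s} g :: real) = s"
    unfolding set_lebesgue_integral_def box using s1 by simp
  have i1: "set_integrable lborel {0..} (\<lambda>g. ln s * \<phi> g)" using d(3) by simp
  have i2: "set_integrable lborel {0..} (\<lambda>g. ln s * (D / c) * indicator {0..s} g)"
    using box_int by simp
  have "ln s * (1 - D / ln c) = ln s * 1 - ln s * (D / c) * s"
    unfolding s_def using c0 c by (simp add: field_simps)
  also have "\<dots> = (LBINT g:{0..}. ln s * \<phi> g - ln s * (D / c) * indicator {0..s} g)"
    using set_integral_diff(2)[OF i1 i2] d(4) box_val by simp
  also have "\<dots> \<le> ergodic_capacity \<phi>"
    unfolding ergodic_capacity_def using set_integral_diff(1)[OF i1 i2] set_integrable_ln_density[OF \<phi>]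
  proof (rule set_integral_mono)
    fix g :: real assume "g \<in> {0..}"
    then have g: "0 \<le> g" by simp
    show "ln s * \<phi> g - ln s * (D / c) * indicator {0..s} g \<le> ln (1 + g) * \<phi> g"
    proof (cases "g \<le> s")
      case True
      then have "ln s * \<phi> g \<le> ln s * (D / c)" using D[OF g] sc ls by (intro mult_left_mono) auto
      moreover have "0 \<le> ln (1 + g) * \<phi> g" using g d(2)[OF g] by simp
      ultimately show ?thesis using True g by simp
    next
      case False
      then have "ln s \<le> ln (1 + g)" using s1 by simp
      then show ?thesis using False d(2)[OF g] by (simp add: mult_right_mono)
    qed
  qed
  finally show ?thesis unfolding s_def .
qed

text \<open>Mean of order \<open>c\<close> and height of order \<open>1 / c\<close> on \<open>[0, c]\<close>: the behaviour of a scale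
  family \<open>\<lambda>g. h (g / c) / c\<close>, here with \<open>c\<close> the average SNR.\<close>
definition scaled_density_family :: "(real \<Rightarrow> real \<Rightarrow> real) \<Rightarrow> bool" where
  "scaled_density_family f \<longleftrightarrow> (\<exists>M D. \<forall>c>0. finite_mean_density (f c)
     \<and> (LBINT g:{0..}. g * f c g) \<le> M * c \<and> (\<forall>g. 0 \<le> g \<longrightarrow> g \<le> c \<longrightarrow> f c g \<le> D / c))"

lemma scaled_density_familyD: "scaled_density_family f \<Longrightarrow> 0 < c \<Longrightarrow> finite_mean_density (f c)"
  by (auto simp: scaled_density_family_def)

lemma ergodic_capacity_asymp:
  assumes "scaled_density_family f"
  shows "((\<lambda>c. ergodic_capacity (f c) / ln c) \<longlongrightarrow> 1) at_top"
proof -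
  obtain M D where f: "\<And>c. 0 < c \<Longrightarrow> finite_mean_density (f c)"
    and M: "\<And>c. 0 < c \<Longrightarrow> (LBINT g:{0..}. g * f c g) \<le> M * c"
    and D: "\<And>c g. 0 < c \<Longrightarrow> 0 \<le> g \<Longrightarrow> g \<le> c \<Longrightarrow> f c g \<le> D / c"
    using assms unfolding scaled_density_family_def by blast
  have large: "0 < c \<and> 1 \<le> ln c" if "exp 1 \<le> c" for c :: real
  proof -
    have "0 < c" using that exp_gt_zero[of 1] by linarith
    then show ?thesis using that ln_le_cancel_iff[of "exp 1" c] by simp
  qed
  have "eventually (\<lambda>c. ln (c / ln c) * (1 - D / ln c) / ln c \<le> ergodic_capacity (f c) / ln c) at_top"
    using eventually_ge_at_top[of "exp 1"]
  proof eventually_elim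
    case (elim c)
    with large have c: "0 < c" "1 \<le> ln c" by auto
    have "ln (c / ln c) * (1 - D / ln c) \<le> ergodic_capacity (f c)"
      using c by (intro ergodic_capacity_ge f D) auto
    then show ?case by (rule divide_right_mono) (use c(2) in simp)
  qed
  moreover have "eventually (\<lambda>c. ergodic_capacity (f c) / ln c \<le> (ln (1 + c) + M) / ln c) at_top"
    using eventually_ge_at_top[of "exp 1"]
  proof eventually_elim
    case (elim c)
    with large have c: "0 < c" "1 \<le> ln c" by auto
    have "ergodic_capacity (f c) \<le> ln (1 + c) + M"
      using c by (intro ergodic_capacity_le f M)
    then show ?case by (rule divide_right_mono) (use c(2) in simp)
  qed
  moreover have "((\<lambda>c. ln (c / ln c) * (1 - D / ln c) / ln c) \<longlongrightarrow> 1) at_top" by real_asymp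
  moreover have "((\<lambda>c. (ln (1 + c) + M) / ln c) \<longlongrightarrow> 1) at_top" by real_asymp
  ultimately show ?thesis by (rule tendsto_sandwich)
qed

lemma secrecy_integral_asymp:
  assumes f: "scaled_density_family f" and \<psi>: "finite_mean_density \<psi>"
  shows "((\<lambda>c. secrecy_integral (f c) \<psi> / ln c) \<longlongrightarrow> 1) at_top"
proof -
  define J where "J = ergodic_capacity \<psi>"
  note bounds = secrecy_integral_bounds[OF scaled_density_familyD[OF f] \<psi>]
  have "eventually (\<lambda>c. ergodic_capacity (f c) / ln c - 2 * J / ln c \<le> secrecy_integral (f c) \<psi> / ln c) at_top"
    using eventually_gt_at_top[of 1]
  proof eventually_elim
    case (elim c)
    have "(ergodic_capacity (f c) - 2 * J) / ln c \<le> secrecy_integral (f c) \<psi> / ln c"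
      using bounds(1)[of c] elim unfolding J_def by (intro divide_right_mono) auto
    then show ?case by (simp add: diff_divide_distrib)
  qed
  moreover have "eventually (\<lambda>c. secrecy_integral (f c) \<psi> / ln c \<le> ergodic_capacity (f c) / ln c) at_top"
    using eventually_gt_at_top[of 1]
  proof eventually_elim
    case (elim c)
    then show ?case using bounds(2)[of c] by (intro divide_right_mono) auto
  qed
  moreover have "((\<lambda>c. ergodic_capacity (f c) / ln c - 2 * J / ln c) \<longlongrightarrow> 1) at_top"
  proof -
    have "((\<lambda>c. 2 * J / ln c) \<longlongrightarrow> 0) at_top" by real_asymp
    from tendsto_diff[OF ergodic_capacity_asymp[OF f] this] show ?thesis by simp
  qed
  moreover note ergodic_capacity_asymp[OF f]
  ultimately show ?thesis by (rule tendsto_sandwich)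
qed

lemma scaled_density_family_mix:
  assumes f1: "scaled_density_family f1" and f2: "scaled_density_family f2" and p: "0 \<le> p" "p \<le> 1"
  shows "scaled_density_family (\<lambda>c g. p * f1 c g + (1 - p) * f2 c g)"
proof -
  obtain M1 D1 where F1: "\<forall>c>0. finite_mean_density (f1 c) \<and> (LBINT g:{0..}. g * f1 c g) \<le> M1 * c
      \<and> (\<forall>g. 0 \<le> g \<longrightarrow> g \<le> c \<longrightarrow> f1 c g \<le> D1 / c)"
    using f1 unfolding scaled_density_family_def by blast
  obtain M2 D2 where F2: "\<forall>c>0. finite_mean_density (f2 c) \<and> (LBINT g:{0..}. g * f2 c g) \<le> M2 * c
      \<and> (\<forall>g. 0 \<le> g \<longrightarrow> g \<le> c \<longrightarrow> f2 c g \<le> D2 / c)"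
    using f2 unfolding scaled_density_family_def by blast
  show ?thesis unfolding scaled_density_family_def
  proof (intro exI allI impI conjI)
    fix c :: real assume c: "0 < c"
    note d1 = finite_mean_densityD[OF F1[rule_format, OF c, THEN conjunct1]]
    note d2 = finite_mean_densityD[OF F2[rule_format, OF c, THEN conjunct1]]
    have [measurable]: "f1 c \<in> borel_measurable borel" "f2 c \<in> borel_measurable borel"
      using d1(1) d2(1) by auto
    have i: "set_integrable lborel {0..} (\<lambda>g. p * f1 c g)"
      "set_integrable lborel {0..} (\<lambda>g. (1 - p) * f2 c g)"
      using d1(3) d2(3) by auto
    have j: "set_integrable lborel {0..} (\<lambda>g. p * (g * f1 c g))"
      "set_integrable lborel {0..} (\<lambda>g. (1 - p) * (g * f2 c g))"
      using d1(5) d2(5) by auto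
    have mean: "(\<lambda>g. g * (p * f1 c g + (1 - p) * f2 c g))
        = (\<lambda>g. p * (g * f1 c g) + (1 - p) * (g * f2 c g))"
      by (auto simp: fun_eq_iff algebra_simps)
    show "finite_mean_density (\<lambda>g. p * f1 c g + (1 - p) * f2 c g)"
      unfolding finite_mean_density_def mean
      using set_integral_add[OF i] set_integral_add[OF j] d1(2,4) d2(2,4) p by auto
    have "(LBINT g:{0..}. g * (p * f1 c g + (1 - p) * f2 c g))
        = p * (LBINT g:{0..}. g * f1 c g) + (1 - p) * (LBINT g:{0..}. g * f2 c g)"
      unfolding mean using set_integral_add(2)[OF j] by simp
    also have "\<dots> \<le> p * (M1 * c) + (1 - p) * (M2 * c)"
      using F1 F2 c p by (intro add_mono mult_left_mono) auto
    finally show "(LBINT g:{0..}. g * (p * f1 c g + (1 - p) * f2 c g)) \<le> (p * M1 + (1 - p) * M2) * c"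
      by (simp add: algebra_simps)
    fix g :: real assume "0 \<le> g" "g \<le> c"
    then have "p * f1 c g + (1 - p) * f2 c g \<le> p * (D1 / c) + (1 - p) * (D2 / c)"
      using F1 F2 c p by (intro add_mono mult_left_mono) auto
    then show "p * f1 c g + (1 - p) * f2 c g \<le> (p * D1 + (1 - p) * D2) / c"
      by (simp add: add_divide_distrib)
  qed
qed

lemma scaled_density_family_rs_density:
  assumes m: "0 < m" and \<beta>: "0 \<le> \<beta>" "\<beta> < 1" and k: "0 < k"
  shows "scaled_density_family (\<lambda>c. rs_density m \<beta> (k / c))"
  unfolding scaled_density_family_def
proof (intro exI allI impI conjI)
  fix c :: real assume c: "0 < c"
  define C where "C = 4 * (1 + \<beta>) powr m / (1 - \<beta>^2)"
  have "\<beta>^2 \<le> \<beta>" using \<beta> by (simp add: power2_eq_square mult_left_le)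
  then have "0 < 1 - \<beta>^2" using \<beta> by linarith
  then have C: "0 \<le> C" by (simp add: C_def)
  have l: "0 < k / c" using k c by simp
  have "4 * (1 + \<beta>) powr m / ((1 - \<beta>^2) * (k / c)) = C / k * c"
    unfolding C_def by simp
  then have mean: "(\<integral>\<^sup>+x. ennreal (x * rs_density m \<beta> (k / c) x) * indicator {0..} x \<partial>lborel)
      \<le> ennreal (C / k * c)"
    using nn_integral_x_rs_density_le[OF m \<beta> l] by simp
  have "0 \<le> C / k * c" using C k c by simp
  note density = finite_mean_densityI_nn_integral[OF borel_measurable_rs_density
      rs_density_nonneg[OF m \<beta>(1) less_imp_le[OF l]] nn_integral_rs_density[OF m \<beta> l] mean this]
  show "finite_mean_density (rs_density m \<beta> (k / c))" by (rule density(1))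
  show "(LBINT g:{0..}. g * rs_density m \<beta> (k / c) g) \<le> C / k * c" by (rule density(2))
  fix g :: real assume g: "0 \<le> g" "g \<le> c"
  have "k / c * g \<le> k / c * c" using g l by (intro mult_left_mono) auto
  then have "rs_density m \<beta> (k / c) g \<le> k / c * (1 - \<beta>) powr m * hyp1F1 m 1 (\<beta> * k)"
    using m \<beta> l c g by (intro rs_density_le) auto
  then show "rs_density m \<beta> (k / c) g \<le> k * (1 - \<beta>) powr m * hyp1F1 m 1 (\<beta> * k) / c"
    by simp
qed

lemma Kbar_nonneg: "0 \<le> p \<Longrightarrow> p \<le> 1 \<Longrightarrow> 0 \<le> K1 \<Longrightarrow> 0 \<le> K2 \<Longrightarrow> 0 \<le> Kbar p K1 K2"
  unfolding Kbar_def by (intro add_nonneg_nonneg mult_nonneg_nonneg) auto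

lemma scaled_density_family_fRS:
  assumes p: "0 \<le> p" "p \<le> 1" and m: "0 < m" and K: "0 < K1" "0 < K2" and Kr: "0 < Kr"
  shows "scaled_density_family (\<lambda>c. fRS p m K1 K2 c Kr)"
proof -
  have "scaled_density_family (\<lambda>c. rs_density m (Kr / (m + Kr)) ((1 + Kbar p K1 K2) / c))"
    using m Kr Kbar_nonneg[OF p, of K1 K2] K
    by (intro scaled_density_family_rs_density) (auto simp: field_simps)
  then show ?thesis by (simp add: fRS_eq_rs_density[OF m Kr])
qed

lemma scaled_density_family_ars_pdf:
  assumes "0 \<le> p" "p \<le> 1" "0 < m" "0 < K1" "0 < K2"
  shows "scaled_density_family (ars_pdf p m K1 K2)"
proof -
  have "scaled_density_family (\<lambda>c g. p * fRS p m K1 K2 c K1 g + (1 - p) * fRS p m K1 K2 c K2 g)"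
    using assms by (intro scaled_density_family_mix scaled_density_family_fRS) auto
  then show ?thesis by (simp add: ars_pdf_def[abs_def])
qed

lemma ars_cdf_eq_density_cdf:
  assumes "0 \<le> p" "p \<le> 1" "0 < m" "0 < K1" "0 < K2" "0 < c"
  shows "ars_cdf p m K1 K2 c x = density_cdf (ars_pdf p m K1 K2 c) x"
proof -
  have "set_integrable lborel {0..x} (fRS p m K1 K2 c Kr)" if "Kr \<in> {K1, K2}" for Kr
    using that assms scaled_density_familyD[OF scaled_density_family_fRS, of p m K1 K2 Kr c]
    by (auto intro: set_integrable_subset[OF finite_mean_densityD(3)])
  then show ?thesis
    unfolding ars_cdf_def ars_pdf_def FRS_def density_cdf_def by (subst set_integral_add) auto
qed

theorem mainTheorem9:
  fixes pB mB KB1 KB2 pE mE KE1 KE2 gE :: real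
  assumes "0 \<le> pB" "pB \<le> 1" "0 < mB" "0 < KB1" "0 < KB2"
      and "0 \<le> pE" "pE \<le> 1" "0 < mE" "0 < KE1" "0 < KE2" "0 < gE"
  shows "((\<lambda>gB. avg_secrecy_capacity pB mB KB1 KB2 gB pE mE KE1 KE2 gE / log 2 gB)
           \<longlongrightarrow> ln 2) at_top"
proof -
  let ?fB = "ars_pdf pB mB KB1 KB2" and ?fE = "ars_pdf pE mE KE1 KE2 gE"
  have B: "scaled_density_family ?fB"
    using assms(1-5) by (rule scaled_density_family_ars_pdf)
  have E: "finite_mean_density ?fE"
    using scaled_density_familyD[OF scaled_density_family_ars_pdf[OF assms(6-10)] assms(11)] .
  have eq: "avg_secrecy_capacity pB mB KB1 KB2 gB pE mE KE1 KE2 gE = secrecy_integral (?fB gB) ?fE"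
    if "0 < gB" for gB
    using ars_cdf_eq_density_cdf[OF assms(1-5) that] ars_cdf_eq_density_cdf[OF assms(6-11)]
    by (simp add: avg_secrecy_capacity_def secrecy_integral_def cross_capacity_def ergodic_capacity_def)
  have "eventually (\<lambda>gB. secrecy_integral (?fB gB) ?fE / ln gB * ln 2
      = avg_secrecy_capacity pB mB KB1 KB2 gB pE mE KE1 KE2 gE / log 2 gB) at_top"
    using eventually_gt_at_top[of "0::real"] by (rule eventually_mono) (simp add: eq log_def)
  from tendsto_cong[OF this] show ?thesis
    using tendsto_mult_right[OF secrecy_integral_asymp[OF B E], of "ln 2"] by simp
qed

end
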